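(* Assume the standing setup, let $\mu=(\mu_1,\dots,\mu_d)$ be an l.s.o.p. for $K[\Delta]$, and let $g\in k[x_1,\dots,x_n]$ be homogeneous of degree $d$. For a facet $F=\{j_1<\dots<j_d\}$ let $g_F(t_1,\dots,t_d)$ be obtained from $g$ by setting $x_i=0$ for $i\notin F$ and $x_{j_m}=t_m$, and let $X_{F,\mu,m}=(-1)^m\,\widehat{\mathrm{ev}}_\mu([F\cup\{0\}\smallsetminus\{j_m\}])\in\widehat K$ for $1\le m\le d$. Then each $X_{F,\mu,m}$ is nonzero and $$\deg_\mu(g)=\sum_{F\text{ facet of }\Delta}\frac{\epsilon_F\, g_F(X_{F,\mu,1},\dots,X_{F,\mu,d})}{\mathrm{ev}_\mu([F])\prod_{m=1}^dX_{F,\mu,m}}.$$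
   Context: Standing setup. $k$ is a field, $d\ge 2$ is an integer, and $\Delta$ is a simplicial complex of dimension $d-1$ with vertex set $V=\{1,\dots,n\}$. $\Delta$ is a connected $k$-homology manifold: $\Delta$ is connected and, for every nonempty face $G$, the link of $G$ has the same homology over $k$ as a sphere of dimension $d-|G|-1$. $\Delta$ is oriented: if $\mathrm{char}\,k\neq 2$, an orientation is a choice, for each facet, of an ordering of its vertices up to even permutations, such that for every $(d-2)$-face the two orientations induced on it by the two facets containing it are opposite; a facet ordered $v_1,\dots,v_d$ induces on the face omitting $v_i$ the ordering $v_1,\dots,\widehat{v_i},\dots,v_d$ if $i-1$ is even, and the opposite orientation if $i-1$ is odd. If $\mathrm{char}\,k=2$, every such $\Delta$ is regarded as oriented. For a facet $F=\{j_1<\dots<j_d\}$, $\epsilon_F\in\{\pm1\}$ is the sign of the permutation taking $(j_1,\dots,j_d)$ to the chosen ordering ($\epsilon_F=1$ if $\mathrm{char}\,k=2$). Let $K=k(a_{i,j}:1\le i\le d,\ 1\le j\le n)$ with the $a_{i,j}$ independent indeterminates, and let $K[\Delta]$ be the Stanley–Reisner ring of $\Delta$ over $K$ in variables $x_1,\dots,x_n$. For degree-one elements $\mu_i=\sum_j\mu_{i,j}x_j$ ($\mu_{i,j}\in K$), let $\mathrm{ev}_\mu:k[a_{i,j}]\to K$ be the $k$-algebra map $a_{i,j}\mapsto\mu_{i,j}$; $\mu$ is an l.s.o.p. for $K[\Delta]$ if and only if $\mathrm{ev}_\mu([F])\neq 0$ for every facet $F$, where for a $d$-element set $F=\{j_1<\dots<j_d\}$,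 $[F]$ is the determinant of the $d\times d$ matrix with $(i,m)$ entry $a_{i,j_m}$. For an l.s.o.p. $\mu$, $H_\mu(\Delta)=K[\Delta]/(\mu_1,\dots,\mu_d)$, $H^d_\mu(\Delta)$ is one-dimensional, and $\deg_\mu:H^d_\mu(\Delta)\to K$ is the isomorphism with $\deg_\mu(x_F)=\epsilon_F/\mathrm{ev}_\mu([F])$ for every facet $F$ (here $x_F=\prod_{j\in F}x_j$); $\deg_\mu(g)$ means $\deg_\mu$ of the image of $g$. Let $\widehat V=\{0\}\cup V$ and $\widehat K=K(a_{i,0}:1\le i\le d)$ with new indeterminates $a_{i,0}$; for a $d$-element subset $\widehat F=\{j_1<\dots<j_d\}\subseteq\widehat V$, $[\widehat F]$ is the determinant of the matrix with $(i,m)$ entry $a_{i,j_m}$. $\widehat{\mathrm{ev}}_\mu:k[a_{i,j}:1\le i\le d,0\le j\le n]\to\widehat K$ is the $k$-algebra map extending $\mathrm{ev}_\mu$ with $a_{i,0}\mapsto a_{i,0}$. *)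

theory Defs
  imports "HOL-Library.Poly_Mapping" "HOL-Library.Product_Lexorder"
    "HOL-Library.Function_Algebras"
    "HOL-Computational_Algebra.Fraction_Field"
    "HOL-Combinatorics.Permutations"
    "Jordan_Normal_Form.Determinant"
begin

definition simplicial_complex :: "nat \<Rightarrow> nat \<Rightarrow> nat set set \<Rightarrow> bool" where
  "simplicial_complex n d \<Delta> \<longleftrightarrow>
     {} \<in> \<Delta> \<and> (\<forall>F\<in>\<Delta>. \<forall>G. G \<subseteq> F \<longrightarrow> G \<in> \<Delta>) \<and>
     (\<forall>v\<in>{1..n}. {v} \<in> \<Delta>) \<and> \<Union>\<Delta> = {1..n} \<and>
     (\<forall>F\<in>\<Delta>. card F \<le> d) \<and> (\<exists>F\<in>\<Delta>. card F = d)"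

definition facets :: "nat set set \<Rightarrow> nat set set" where
  "facets \<Delta> = {F \<in> \<Delta>. \<forall>G\<in>\<Delta>. F \<subseteq> G \<longrightarrow> G = F}"

definition link :: "nat set set \<Rightarrow> nat set \<Rightarrow> nat set set" where
  "link \<Delta> G = {H \<in> \<Delta>. H \<inter> G = {} \<and> H \<union> G \<in> \<Delta>}"

text \<open>Connectedness (of the 1-skeleton, equivalently of the geometric realization).\<close>
definition connected_cx :: "nat set set \<Rightarrow> bool" where
  "connected_cx \<Delta> \<longleftrightarrow>
     (\<forall>u\<in>\<Union>\<Delta>. \<forall>v\<in>\<Union>\<Delta>. (u, v) \<in> {(a, b). {a, b} \<in> \<Delta>}\<^sup>*)"

text \<open>Chains: k-valued functions on faces of cardinality s (i.e. of dimension s-1);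
  s = 0 corresponds to the empty face (reduced homology in degree -1).\<close>
definition chains :: "'k itself \<Rightarrow> nat set set \<Rightarrow> nat \<Rightarrow> (nat set \<Rightarrow> 'k::field) set" where
  "chains _ L s = {f. \<forall>\<sigma>. f \<sigma> \<noteq> 0 \<longrightarrow> \<sigma> \<in> L \<and> card \<sigma> = s}"

definition bd :: "nat set set \<Rightarrow> (nat set \<Rightarrow> 'k::field) \<Rightarrow> (nat set \<Rightarrow> 'k)" where
  "bd L f = (\<lambda>\<tau>. \<Sum>\<sigma>\<in>{\<sigma>\<in>L. \<tau> \<subseteq> \<sigma> \<and> card \<sigma> = Suc (card \<tau>)}.
              (-1) ^ card {u\<in>\<sigma>. u < the_elem (\<sigma> - \<tau>)} * f \<sigma>)"

definition kdim :: "'k itself \<Rightarrow> (nat set \<Rightarrow> 'k::field) set \<Rightarrow> nat" where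
  "kdim _ S = vector_space.dim (\<lambda>(c::'k) (f::nat set \<Rightarrow> 'k) x. c * f x) S"

text \<open>L has the reduced homology over k of a sphere of dimension m (m \<ge> -1):
  the reduced Betti number in degree s-1 equals 1 if s-1 = m and 0 otherwise.\<close>
definition sphere_homology :: "'k::field itself \<Rightarrow> nat set set \<Rightarrow> int \<Rightarrow> bool" where
  "sphere_homology k L m \<longleftrightarrow>
     (\<forall>s::nat. kdim k {f \<in> chains k L s. bd L f = 0}
        = kdim k (bd L ` chains k L (Suc s)) + (if int s - 1 = m then 1 else 0))"

definition homology_manifold :: "'k::field itself \<Rightarrow> nat \<Rightarrow> nat set set \<Rightarrow> bool" where
  "homology_manifold k d \<Delta> \<longleftrightarrow>
     (\<forall>G\<in>\<Delta>. G \<noteq> {} \<longrightarrow> sphere_homology k (link \<Delta> G) (int d - int (card G) - 1))"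

definition lpos :: "nat list \<Rightarrow> nat \<Rightarrow> nat" where
  "lpos xs v = (LEAST i. i < length xs \<and> xs ! i = v)"

definition list_perm_sign :: "nat list \<Rightarrow> nat list \<Rightarrow> int" where
  "list_perm_sign xs ys = sign (\<lambda>i. if i < length ys then lpos xs (ys ! i) else i)"

text \<open>o assigns to each facet an ordering of its vertices; the ordering x omitting
  the vertex at (0-based) position i induces the orientation (-1)^i times that of the
  remaining list.  Two facets sharing a (d-2)-face induce opposite orientations on it.\<close>
definition is_orientation :: "nat \<Rightarrow> nat set set \<Rightarrow> (nat set \<Rightarrow> nat list) \<Rightarrow> bool" where
  "is_orientation d \<Delta> ori \<longleftrightarrow>
     (\<forall>F\<in>facets \<Delta>. distinct (ori F) \<and> set (ori F) = F) \<and>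
     (\<forall>F\<in>facets \<Delta>. \<forall>F'\<in>facets \<Delta>. F \<noteq> F' \<and> card (F \<inter> F') = d - 1 \<longrightarrow>
        (\<forall>v\<in>F - F'. \<forall>v'\<in>F' - F.
           (-1) ^ lpos (ori F) v * (-1) ^ lpos (ori F') v'
             * list_perm_sign (remove1 v (ori F)) (remove1 v' (ori F')) = -1))"

text \<open>Polynomial ring k[a_{i,j}] (variables indexed by pairs) and its fraction field.
  K-hat = K(a_{i,0}) is realised inside this fraction field; K is the subfield of
  fractions whose numerator and denominator only involve a_{i,j}, 1\<le>i\<le>d, 1\<le>j\<le>n.\<close>
type_synonym 'k Khat = "(((nat \<times> nat) \<Rightarrow>\<^sub>0 nat) \<Rightarrow>\<^sub>0 'k) fract"

definition of_k :: "'k::field \<Rightarrow> 'k Khat" where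
  "of_k c = Fract (Poly_Mapping.single 0 c) 1"

definition avar :: "nat \<Rightarrow> nat \<Rightarrow> 'k::field Khat" where
  "avar i j = Fract (Poly_Mapping.single (Poly_Mapping.single (i, j) 1) 1) 1"

definition Kfield :: "nat \<Rightarrow> nat \<Rightarrow> 'k::field Khat set" where
  "Kfield d n = {Fract p q | (p :: ((nat \<times> nat) \<Rightarrow>\<^sub>0 nat) \<Rightarrow>\<^sub>0 'k) q. q \<noteq> 0 \<and>
      (\<forall>m \<in> Poly_Mapping.keys p \<union> Poly_Mapping.keys q. Poly_Mapping.keys m \<subseteq> {1..d} \<times> {1..n})}"

definition bracket :: "nat \<Rightarrow> (nat \<Rightarrow> nat \<Rightarrow> 'a::comm_ring_1) \<Rightarrow> nat set \<Rightarrow> 'a" where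
  "bracket d c S = det (mat d d (\<lambda>(i, m). c (i + 1) (sorted_list_of_set S ! m)))"

text \<open>ev-hat_mu: a_{i,j} \<mapsto> mu_{i,j} for j \<ge> 1 and a_{i,0} \<mapsto> a_{i,0}.\<close>
definition hat_col :: "(nat \<Rightarrow> nat \<Rightarrow> 'k::field Khat) \<Rightarrow> nat \<Rightarrow> nat \<Rightarrow> 'k Khat" where
  "hat_col \<mu> i j = (if j = 0 then avar i 0 else \<mu> i j)"

text \<open>mu is an l.s.o.p.: ev_mu([F]) \<noteq> 0 for every facet F.\<close>
definition is_lsop :: "nat \<Rightarrow> nat set set \<Rightarrow> (nat \<Rightarrow> nat \<Rightarrow> 'k::field Khat) \<Rightarrow> bool" where
  "is_lsop d \<Delta> \<mu> \<longleftrightarrow> (\<forall>F\<in>facets \<Delta>. bracket d (hat_col \<mu>) F \<noteq> 0)"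

text \<open>X_{F,mu,m} for the vertex j = j_m of F (m = 1 + number of smaller vertices).\<close>
definition Xc :: "nat \<Rightarrow> (nat \<Rightarrow> nat \<Rightarrow> 'k::field Khat) \<Rightarrow> nat set \<Rightarrow> nat \<Rightarrow> 'k Khat" where
  "Xc d \<mu> F j = (-1) ^ (card {u\<in>F. u < j} + 1) * bracket d (hat_col \<mu>) (insert 0 F - {j})"

definition mdeg :: "(nat \<Rightarrow>\<^sub>0 nat) \<Rightarrow> nat" where
  "mdeg \<alpha> = (\<Sum>j\<in>Poly_Mapping.keys \<alpha>. Poly_Mapping.lookup \<alpha> j)"

definition Mons :: "nat \<Rightarrow> nat \<Rightarrow> (nat \<Rightarrow>\<^sub>0 nat) set" where
  "Mons n e = {\<alpha>. Poly_Mapping.keys \<alpha> \<subseteq> {1..n} \<and> mdeg \<alpha> = e}"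

definition homogeneous :: "nat \<Rightarrow> nat \<Rightarrow> ((nat \<Rightarrow>\<^sub>0 nat) \<Rightarrow>\<^sub>0 'k::field) \<Rightarrow> bool" where
  "homogeneous n d g \<longleftrightarrow> Poly_Mapping.keys g \<subseteq> Mons n d"

definition mono_of :: "nat set \<Rightarrow> (nat \<Rightarrow>\<^sub>0 nat)" where
  "mono_of F = (\<Sum>j\<in>F. Poly_Mapping.single j 1)"

definition mpoly_eval :: "((nat \<Rightarrow>\<^sub>0 nat) \<Rightarrow>\<^sub>0 'k::field) \<Rightarrow> (nat \<Rightarrow> 'k Khat) \<Rightarrow> 'k Khat" where
  "mpoly_eval g x = (\<Sum>\<alpha>\<in>Poly_Mapping.keys g. of_k (Poly_Mapping.lookup g \<alpha>) * (\<Prod>j\<in>Poly_Mapping.keys \<alpha>. x j ^ Poly_Mapping.lookup \<alpha> j))"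

definition eps :: "'k::field itself \<Rightarrow> (nat set \<Rightarrow> nat list) \<Rightarrow> nat set \<Rightarrow> 'k Khat" where
  "eps _ ori F = (if CHAR('k) = 2 then 1 else of_int (list_perm_sign (sorted_list_of_set F) (ori F)))"

text \<open>phi describes deg_mu on H^d_mu: the K-linear functional on K[x]_d given on
  degree-d monomials by phi, vanishing on (I_Delta + (mu_1,...,mu_d))_d, with
  deg_mu(x_F) = eps_F / ev_mu([F]) for every facet F.\<close>
definition is_deg_map :: "'k::field itself \<Rightarrow> nat \<Rightarrow> nat \<Rightarrow> nat set set \<Rightarrow> (nat set \<Rightarrow> nat list)
    \<Rightarrow> (nat \<Rightarrow> nat \<Rightarrow> 'k Khat) \<Rightarrow> ((nat \<Rightarrow>\<^sub>0 nat) \<Rightarrow> 'k Khat) \<Rightarrow> bool" where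
  "is_deg_map k n d \<Delta> ori \<mu> \<phi> \<longleftrightarrow>
     (\<forall>\<alpha>\<in>Mons n d. \<phi> \<alpha> \<in> Kfield d n) \<and>
     (\<forall>\<alpha>\<in>Mons n d. Poly_Mapping.keys \<alpha> \<notin> \<Delta> \<longrightarrow> \<phi> \<alpha> = 0) \<and>
     (\<forall>i\<in>{1..d}. \<forall>\<beta>\<in>Mons n (d - 1).
        (\<Sum>j=1..n. \<mu> i j * \<phi> (\<beta> + Poly_Mapping.single j 1)) = 0) \<and>
     (\<forall>F\<in>facets \<Delta>. \<phi> (mono_of F) = eps k ori F / bracket d (hat_col \<mu>) F)"

definition deg_eval :: "((nat \<Rightarrow>\<^sub>0 nat) \<Rightarrow> 'k::field Khat) \<Rightarrow> ((nat \<Rightarrow>\<^sub>0 nat) \<Rightarrow>\<^sub>0 'k) \<Rightarrow> 'k Khat" where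
  "deg_eval \<phi> g = (\<Sum>\<alpha>\<in>Poly_Mapping.keys g. of_k (Poly_Mapping.lookup g \<alpha>) * \<phi> \<alpha>)"

end

theory Submission imports Defs begin

text \<open>
  Up to sign, X_{F,\<mu>,m} is the bracket of F \<union> {0} - {j_m}. Expanding it along the column of
  the vertex 0 gives \<Sum>_i a_{i,0} times minors in which no a_{i,0} occurs; the same minors are
  the cofactors of [F] along the column of j_m, so one of them is nonzero because [F] \<noteq> 0.
  Since the a_{i,0} are linearly independent over the fractions not involving them,
  X_{F,\<mu>,m} \<noteq> 0.

  Let \<psi>(x^\<alpha>) be the right-hand side of the formula for the monomial x^\<alpha>. Expanding a
  determinant with a repeated row gives \<Sum>_j \<mu>_{i,j} X_{F,\<mu>,j} = -a_{i,0} [F], so the linear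
  relations \<Sum>_j \<mu>_{i,j} \<psi>(x^\<beta> x_j) = 0 defining deg_\<mu> hold for \<psi> up to a multiple of the
  column (a_{i,0})_i. Moreover \<psi> vanishes on monomials whose support is not a face and agrees
  with deg_\<mu> on the squarefree monomials of facets (all facets have d vertices, since the link
  of a facet is {\<emptyset>}). The difference D = deg_\<mu> - \<psi> then vanishes by induction on d minus
  the size of the support G of \<alpha>. If |G| < d, write x^\<alpha> = x^\<beta> x_j with x_j dividing x^\<beta>
  and choose a facet F \<supseteq> G and j_0 \<in> F - G. By induction the relation at \<beta> involves only the
  values D(x^\<beta> x_k), k \<in> G, so it is a linear dependence between the columns of
  F \<union> {0} - {j_0} indexed by G and by 0. The bracket of these columns is \<plusminus>X_{F,\<mu>,j_0} \<noteq> 0,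
  hence all these values vanish.
\<close>

section \<open>Fractions free of the variables a_{i,0}\<close>

type_synonym 'k apoly = "((nat \<times> nat) \<Rightarrow>\<^sub>0 nat) \<Rightarrow>\<^sub>0 'k"

definition a0_free_poly :: "'k::field apoly \<Rightarrow> bool" where
  "a0_free_poly p \<longleftrightarrow> (\<forall>m\<in>Poly_Mapping.keys p. \<forall>i. Poly_Mapping.lookup m (i, 0) = 0)"

definition a0_free :: "'k::field Khat \<Rightarrow> bool" where
  "a0_free x \<longleftrightarrow> (\<exists>p q. q \<noteq> 0 \<and> x = Fract p q \<and> a0_free_poly p \<and> a0_free_poly q)"

lemma a0_free_poly_0 [simp]: "a0_free_poly 0"
  and a0_free_poly_1 [simp]: "a0_free_poly 1"
  by (simp_all add: a0_free_poly_def)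

lemma a0_free_poly_add: "a0_free_poly p \<Longrightarrow> a0_free_poly q \<Longrightarrow> a0_free_poly (p + q)"
  unfolding a0_free_poly_def using keys_add[of p q] by blast

lemma a0_free_poly_uminus: "a0_free_poly p \<Longrightarrow> a0_free_poly (- p)"
  unfolding a0_free_poly_def by simp

lemma a0_free_poly_mult: "a0_free_poly p \<Longrightarrow> a0_free_poly q \<Longrightarrow> a0_free_poly (p * q)"
  unfolding a0_free_poly_def
proof (intro ballI allI)
  fix m i
  assume "\<forall>m\<in>Poly_Mapping.keys p. \<forall>i. Poly_Mapping.lookup m (i, 0) = 0"
    and "\<forall>m\<in>Poly_Mapping.keys q. \<forall>i. Poly_Mapping.lookup m (i, 0) = 0"
    and "m \<in> Poly_Mapping.keys (p * q)"
  moreover obtain a b where "m = a + b" "a \<in> Poly_Mapping.keys p" "b \<in> Poly_Mapping.keys q"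
    using keys_mult[of p q] calculation(3) by blast
  ultimately show "Poly_Mapping.lookup m (i, 0) = 0" by (simp add: lookup_add)
qed

lemma a0_free_poly_prod: "(\<And>i. i \<in> I \<Longrightarrow> a0_free_poly (f i)) \<Longrightarrow> a0_free_poly (prod f I)"
  by (induct I rule: infinite_finite_induct) (simp_all add: a0_free_poly_mult)

lemma a0_free_0 [simp]: "a0_free 0"
  unfolding a0_free_def Zero_fract_def by (intro exI[of _ 0] exI[of _ 1]) simp

lemma a0_free_1 [simp]: "a0_free 1"
  unfolding a0_free_def One_fract_def by (intro exI[of _ 1] exI[of _ 1]) simp

lemma a0_free_add:
  assumes "a0_free x" "a0_free y" shows "a0_free (x + y)"
proof -
  obtain p q p' q' where "q \<noteq> 0" "x = Fract p q" "a0_free_poly p" "a0_free_poly q"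
    "q' \<noteq> 0" "y = Fract p' q'" "a0_free_poly p'" "a0_free_poly q'"
    using assms unfolding a0_free_def by blast
  moreover have "x + y = Fract (p * q' + p' * q) (q * q')"
    using calculation by simp
  ultimately show ?thesis unfolding a0_free_def
    by (metis a0_free_poly_add a0_free_poly_mult mult_eq_0_iff)
qed

lemma a0_free_mult:
  assumes "a0_free x" "a0_free y" shows "a0_free (x * y)"
proof -
  obtain p q p' q' where "q \<noteq> 0" "x = Fract p q" "a0_free_poly p" "a0_free_poly q"
    "q' \<noteq> 0" "y = Fract p' q'" "a0_free_poly p'" "a0_free_poly q'"
    using assms unfolding a0_free_def by blast
  moreover have "x * y = Fract (p * p') (q * q')"
    using calculation by (simp only: mult_fract)
  ultimately show ?thesis unfolding a0_free_def
    by (metis a0_free_poly_mult mult_eq_0_iff)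
qed

lemma a0_free_uminus: "a0_free x \<Longrightarrow> a0_free (- x)"
  unfolding a0_free_def by (metis minus_fract a0_free_poly_uminus)

lemma a0_free_of_nat: "a0_free (of_nat k)"
  by (induct k) (simp_all add: a0_free_add)

lemma a0_free_of_int: "a0_free (of_int c)"
proof (cases c rule: int_cases)
  case (nonneg n)
  then show ?thesis by (simp add: a0_free_of_nat)
next
  case (neg n)
  then show ?thesis by (simp only: of_int_minus of_int_of_nat_eq a0_free_uminus a0_free_of_nat)
qed

lemma a0_free_sum: "(\<And>i. i \<in> I \<Longrightarrow> a0_free (f i)) \<Longrightarrow> a0_free (sum f I)"
  by (induct I rule: infinite_finite_induct) (auto intro: a0_free_add)

lemma a0_free_prod: "(\<And>i. i \<in> I \<Longrightarrow> a0_free (f i)) \<Longrightarrow> a0_free (prod f I)"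
  by (induct I rule: infinite_finite_induct) (auto intro: a0_free_mult)

lemma a0_free_det:
  assumes "A \<in> carrier_mat m m" and "\<And>i j. i < m \<Longrightarrow> j < m \<Longrightarrow> a0_free (A $$ (i, j))"
  shows "a0_free (det A)"
  unfolding det_def'[OF assms(1)]
  by (intro a0_free_sum a0_free_mult a0_free_of_int a0_free_prod assms(2))
    (simp_all add: permutes_in_image)

lemma Kfield_a0_free:
  assumes "x \<in> Kfield d n" shows "a0_free x"
proof -
  obtain p q where "x = Fract p q" "q \<noteq> 0" and keys:
    "\<forall>m \<in> Poly_Mapping.keys p \<union> Poly_Mapping.keys q. Poly_Mapping.keys m \<subseteq> {1..d} \<times> {1..n}"
    using assms unfolding Kfield_def by blast
  moreover have "Poly_Mapping.lookup m (i, 0) = 0" if "m \<in> Poly_Mapping.keys p \<union> Poly_Mapping.keys q" for m i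
  proof -
    have "Poly_Mapping.keys m \<subseteq> {1..d} \<times> {1..n}" using keys that by blast
    then have "(i, 0) \<notin> Poly_Mapping.keys m" by auto
    then show ?thesis by (simp add: in_keys_iff)
  qed
  ultimately show ?thesis unfolding a0_free_def a0_free_poly_def by blast
qed

definition apoly_var :: "nat \<Rightarrow> nat \<Rightarrow> 'k::field apoly" where
  "apoly_var i j = Poly_Mapping.single (Poly_Mapping.single (i, j) 1) 1"

lemma avar_def': "avar i j = Fract (apoly_var i j) 1"
  unfolding avar_def apoly_var_def ..

lemma lookup_single_mult_add:
  fixes t m :: "'a \<Rightarrow>\<^sub>0 nat" and p :: "('a \<Rightarrow>\<^sub>0 nat) \<Rightarrow>\<^sub>0 'k::field"
  shows "Poly_Mapping.lookup (Poly_Mapping.single t 1 * p) (t + m) = Poly_Mapping.lookup p m"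
proof -
  have "Poly_Mapping.lookup (Poly_Mapping.single t 1 * p) (t + m)
      = Sum_any (\<lambda>l. Sum_any (\<lambda>r. Poly_Mapping.lookup p r when t + m = l + r) when t = l)"
    by (simp only: lookup_mult lookup_single when_mult mult_1_left)
  also have "\<dots> = Sum_any (\<lambda>r. Poly_Mapping.lookup p r when m = r)"
    by (simp only: Sum_any_when_equal' add_left_cancel)
  also have "\<dots> = Poly_Mapping.lookup p m"
    by (rule Sum_any_when_equal')
  finally show ?thesis .
qed

lemma lookup_apoly_var_mult_eq_0:
  assumes "Poly_Mapping.lookup s (i, j) = 0"
  shows "Poly_Mapping.lookup (apoly_var i j * p) s = 0"
proof (rule ccontr)
  assume "Poly_Mapping.lookup (apoly_var i j * p) s \<noteq> 0"
  then have "s \<in> Poly_Mapping.keys (apoly_var i j * p)"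
    by (simp add: in_keys_iff)
  then obtain b where "s = Poly_Mapping.single (i, j) 1 + b"
    using keys_mult[of "apoly_var i j" p] unfolding apoly_var_def by auto
  then show False using assms by (simp add: lookup_add)
qed

text \<open>Compare coefficients at the monomial a_{k,0} m for m in the support of P k.\<close>
lemma apoly_var0_combination_eq_0:
  fixes P :: "nat \<Rightarrow> 'k::field apoly"
  assumes "finite I" "k \<in> I" "\<And>i. i \<in> I \<Longrightarrow> a0_free_poly (P i)"
    and "(\<Sum>i\<in>I. apoly_var i 0 * P i) = 0"
  shows "P k = 0"
proof (rule poly_mapping_eqI)
  fix m
  show "Poly_Mapping.lookup (P k) m = Poly_Mapping.lookup 0 m"
  proof (cases "m \<in> Poly_Mapping.keys (P k)")
    case False
    then show ?thesis by (simp add: in_keys_iff)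
  next
    case True
    then have m0: "Poly_Mapping.lookup m (i, 0) = 0" for i
      using assms(2,3) unfolding a0_free_poly_def by blast
    define s where "s = Poly_Mapping.single (k, 0) 1 + m"
    have "Poly_Mapping.lookup (apoly_var i 0 * P i) s = 0" if "i \<noteq> k" for i
      using that by (intro lookup_apoly_var_mult_eq_0) (simp add: s_def lookup_add m0 lookup_single)
    then have "Poly_Mapping.lookup (\<Sum>i\<in>I. apoly_var i 0 * P i) s
        = Poly_Mapping.lookup (apoly_var k 0 * P k) s"
      using assms(1,2) by (simp add: lookup_sum lookup_add sum.remove)
    also have "\<dots> = Poly_Mapping.lookup (P k) m"
      unfolding apoly_var_def s_def by (rule lookup_single_mult_add)
    finally show ?thesis using assms(4) by simp
  qed
qed

lemma sum_Fract_1: "(\<Sum>i\<in>I. Fract (f i) 1) = Fract (sum f I) 1"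
  by (induct I rule: infinite_finite_induct) (simp_all add: Zero_fract_def)

lemma avar0_combination_eq_0:
  fixes e :: "nat \<Rightarrow> 'k::field Khat"
  assumes I: "finite I" "k \<in> I" and free: "\<And>i. i \<in> I \<Longrightarrow> a0_free (e i)"
    and comb: "(\<Sum>i\<in>I. avar i 0 * e i) = 0"
  shows "e k = 0"
proof -
  have "\<forall>i\<in>I. \<exists>p q. q \<noteq> 0 \<and> e i = Fract p q \<and> a0_free_poly p \<and> a0_free_poly q"
    using free unfolding a0_free_def by blast
  then obtain p q where pq: "\<And>i. i \<in> I \<Longrightarrow>
      q i \<noteq> 0 \<and> e i = Fract (p i) (q i) \<and> a0_free_poly (p i) \<and> a0_free_poly (q i)"
    by metis
  define R where "R i = (\<Prod>j\<in>I - {i}. q j)" for i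
  have R0: "R i \<noteq> 0" for i
    unfolding R_def using I(1) pq by simp
  have cleared: "avar i 0 * e i * Fract (\<Prod>i\<in>I. q i) 1 = Fract (apoly_var i 0 * (p i * R i)) 1"
    if "i \<in> I" for i
  proof -
    have "(\<Prod>i\<in>I. q i) = q i * R i" unfolding R_def using I(1) that by (simp add: prod.remove)
    then show ?thesis using pq[OF that] by (simp add: avar_def' eq_fract ac_simps)
  qed
  have "Fract (\<Sum>i\<in>I. apoly_var i 0 * (p i * R i)) 1
      = (\<Sum>i\<in>I. avar i 0 * e i) * Fract (\<Prod>i\<in>I. q i) 1"
    by (simp add: sum_distrib_right cleared flip: sum_Fract_1)
  then have "Fract (\<Sum>i\<in>I. apoly_var i 0 * (p i * R i)) 1 = 0"
    using comb by simp
  then have "(\<Sum>i\<in>I. apoly_var i 0 * (p i * R i)) = 0"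
    by (simp add: Zero_fract_def eq_fract)
  then have "p k * R k = 0"
    using I pq unfolding R_def
    by (intro apoly_var0_combination_eq_0) (auto intro: a0_free_poly_mult a0_free_poly_prod)
  then show ?thesis using pq[OF I(2)] R0 by (simp add: Zero_fract_def eq_fract)
qed

section \<open>Brackets\<close>

definition delete_nth :: "nat \<Rightarrow> 'a list \<Rightarrow> 'a list" where
  "delete_nth p xs = take p xs @ drop (Suc p) xs"

lemma nth_delete_nth:
  "p < length xs \<Longrightarrow> m < length xs - 1 \<Longrightarrow> delete_nth p xs ! m = xs ! insert_index p m"
  unfolding delete_nth_def insert_index_def by (auto simp: nth_append min_def)

lemma delete_nth_Suc_Cons: "delete_nth (Suc p) (x # xs) = x # delete_nth p xs"
  unfolding delete_nth_def by simp

lemma delete_nth_eq_remove1: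
  assumes "distinct xs" "p < length xs"
  shows "delete_nth p xs = remove1 (xs ! p) xs"
proof -
  have xs: "xs = take p xs @ xs ! p # drop (Suc p) xs"
    using assms(2) by (rule id_take_nth_drop)
  have "xs ! p \<notin> set (take p xs)"
    using assms by (auto simp: in_set_conv_nth nth_eq_iff_index_eq)
  then show ?thesis unfolding delete_nth_def by (subst (2) xs) (simp add: remove1_append)
qed

lemma sorted_list_of_set_nth_card_less:
  assumes "finite F" "p < card F"
  shows "card {u \<in> F. u < sorted_list_of_set F ! p} = p"
proof -
  let ?L = "sorted_list_of_set F"
  have L: "sorted ?L" "distinct ?L" "length ?L = card F" "set ?L = F" using assms(1) by auto
  have "{u \<in> F. u < ?L ! p} = (!) ?L ` {..<p}"
  proof (intro equalityI subsetI)
    fix u assume "u \<in> {u \<in> F. u < ?L ! p}"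
    then have "u \<in> set ?L" "u < ?L ! p" using L(4) by auto
    then obtain q where q: "q < card F" "u = ?L ! q" "?L ! q < ?L ! p"
      using L(3) by (metis in_set_conv_nth)
    have "q < p"
    proof (rule ccontr)
      assume "\<not> q < p"
      then have "?L ! p \<le> ?L ! q" using L q(1) by (simp add: sorted_nth_mono)
      then show False using q(3) by simp
    qed
    then show "u \<in> (!) ?L ` {..<p}" using q(2) by blast
  next
    fix u assume "u \<in> (!) ?L ` {..<p}"
    then obtain q where q: "q < p" "u = ?L ! q" by blast
    have "?L ! q \<le> ?L ! p" using L q(1) assms(2) by (simp add: sorted_nth_mono)
    moreover have "?L ! q \<noteq> ?L ! p" using L q(1) assms(2) by (simp add: nth_eq_iff_index_eq)
    moreover have "?L ! q \<in> F" using L q(1) assms(2) nth_mem[of q ?L] by simp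
    ultimately show "u \<in> {u \<in> F. u < ?L ! p}" using q(2) by simp
  qed
  moreover have "inj_on ((!) ?L) {..<p}"
    using L assms(2) by (intro inj_on_nth) auto
  ultimately show ?thesis by (simp add: card_image)
qed

lemma sum_sorted_list_of_set:
  assumes "finite F"
  shows "(\<Sum>m<card F. g (sorted_list_of_set F ! m)) = (\<Sum>j\<in>F. g j)"
proof -
  have "bij_betw ((!) (sorted_list_of_set F)) {..<card F} F"
    using assms by (intro bij_betw_nth) auto
  then show ?thesis by (rule sum.reindex_bij_betw)
qed

lemma sorted_list_of_set_insert0_minus:
  fixes F :: "nat set"
  assumes "finite F" "0 \<notin> F" "p < card F"
  shows "sorted_list_of_set (insert 0 F - {sorted_list_of_set F ! p})
    = 0 # delete_nth p (sorted_list_of_set F)"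
proof (rule sorted_distinct_set_unique[OF sorted_sorted_list_of_set distinct_sorted_list_of_set])
  let ?L = "sorted_list_of_set F"
  have L: "sorted ?L" "distinct ?L" "p < length ?L" "set ?L = F" using assms by auto
  then have del: "delete_nth p ?L = remove1 (?L ! p) ?L"
    by (intro delete_nth_eq_remove1)
  show "sorted (0 # delete_nth p ?L)" "distinct (0 # delete_nth p ?L)"
    using L assms(2) unfolding del by (auto intro: sorted_remove1)
  show "set (sorted_list_of_set (insert 0 F - {?L ! p})) = set (0 # delete_nth p ?L)"
    using L assms nth_mem[OF L(3)] unfolding del by auto
qed

definition bracket_mat :: "nat \<Rightarrow> (nat \<Rightarrow> nat \<Rightarrow> 'a::comm_ring_1) \<Rightarrow> nat list \<Rightarrow> 'a mat" where
  "bracket_mat d c xs = mat d d (\<lambda>(i, m). c (i + 1) (xs ! m))"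

lemma bracket_eq_det: "bracket d c S = det (bracket_mat d c (sorted_list_of_set S))"
  unfolding bracket_def bracket_mat_def by simp

lemma bracket_mat_carrier [simp]: "bracket_mat d c xs \<in> carrier_mat d d"
  unfolding bracket_mat_def by simp

lemma mat_delete_bracket_mat_delete_nth:
  assumes "p < length xs" "length xs = d"
  shows "mat_delete (bracket_mat d c xs) i p = mat_delete (bracket_mat d c (x # delete_nth p xs)) i 0"
  unfolding mat_delete_def bracket_mat_def
  by (rule eq_matI) (use assms in \<open>auto simp: nth_delete_nth\<close>)

lemma bracket_ne_0_columns_independent:
  fixes c :: "nat \<Rightarrow> nat \<Rightarrow> 'a::field"
  assumes C: "finite C" "card C = d" and "bracket d c C \<noteq> 0"
    and comb: "\<And>i. i \<in> {1..d} \<Longrightarrow> (\<Sum>x\<in>C. c i x * w x) = 0"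
    and "x \<in> C"
  shows "w x = 0"
proof -
  let ?L = "sorted_list_of_set C"
  define M where "M = bracket_mat d c ?L"
  define v where "v = vec d (\<lambda>m. w (?L ! m))"
  have "M *\<^sub>v v = 0\<^sub>v d"
  proof (rule eq_vecI)
    fix i assume "i < dim_vec (0\<^sub>v d)"
    then have i: "i < d" by simp
    have "(M *\<^sub>v v) $ i = (\<Sum>m<card C. c (Suc i) (?L ! m) * w (?L ! m))"
      using i C(2) by (simp add: M_def v_def bracket_mat_def scalar_prod_def atLeast0LessThan)
    also have "\<dots> = (\<Sum>x\<in>C. c (Suc i) x * w x)"
      by (rule sum_sorted_list_of_set[OF C(1)])
    also have "\<dots> = 0"
      using i by (intro comb) simp
    finally show "(M *\<^sub>v v) $ i = 0\<^sub>v d $ i" using i by simp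
  qed (simp add: M_def bracket_mat_def)
  moreover have "det M \<noteq> 0"
    using assms(3) unfolding M_def bracket_eq_det .
  moreover have "v \<in> carrier_vec d" by (simp add: v_def)
  ultimately have "v = 0\<^sub>v d"
    using det_0_iff_vec_prod_zero[of M d] unfolding M_def by auto
  moreover obtain m where "m < d" "x = ?L ! m"
    using assms(5) C by (metis in_set_conv_nth length_sorted_list_of_set set_sorted_list_of_set)
  ultimately show ?thesis by (metis index_vec index_zero_vec(1) v_def)
qed

text \<open>Expand along column 0 the determinant of [0 F] whose first row repeats row i.\<close>
lemma sum_mu_Xc:
  fixes \<mu> :: "nat \<Rightarrow> nat \<Rightarrow> 'k::field Khat"
  assumes F: "finite F" "card F = d" "0 \<notin> F" and i: "i \<in> {1..d}"
  shows "(\<Sum>j\<in>F. \<mu> i j * Xc d \<mu> F j) = - (avar i 0 * bracket d (hat_col \<mu>) F)"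
proof -
  let ?c = "hat_col \<mu>" and ?L = "sorted_list_of_set F"
  have L: "length ?L = d" "set ?L = F" using F by auto
  define B where "B = mat (Suc d) (Suc d) (\<lambda>(r, m). ?c (if r = 0 then i else r) ((0 # ?L) ! m))"
  have B: "B \<in> carrier_mat (Suc d) (Suc d)" unfolding B_def by simp
  have "row B 0 = row B i"
    by (rule eq_vecI) (use i in \<open>auto simp: B_def\<close>)
  then have "det B = 0"
    using i by (intro det_identical_rows[OF B, of 0 i]) auto
  have minor: "mat_delete B 0 m = bracket_mat d ?c (delete_nth m (0 # ?L))" if "m < Suc d" for m
    unfolding mat_delete_def B_def bracket_mat_def
    by (rule eq_matI) (use that L in \<open>auto simp: nth_delete_nth\<close>)
  have col: "B $$ (0, Suc m) * cofactor B 0 (Suc m) = \<mu> i (?L ! m) * Xc d \<mu> F (?L ! m)"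
    if m: "m < d" for m
  proof -
    have "?L ! m \<in> F" using m L nth_mem by metis
    moreover have "card {u \<in> F. u < ?L ! m} = m"
      using F m by (simp add: sorted_list_of_set_nth_card_less)
    moreover have "sorted_list_of_set (insert 0 F - {?L ! m}) = delete_nth (Suc m) (0 # ?L)"
      using F m by (simp add: sorted_list_of_set_insert0_minus delete_nth_Suc_Cons)
    ultimately have "cofactor B 0 (Suc m) = (-1) ^ (card {u \<in> F. u < ?L ! m} + 1)
        * bracket d ?c (insert 0 F - {?L ! m})"
      using m by (simp add: cofactor_def minor bracket_eq_det)
    moreover have "B $$ (0, Suc m) = \<mu> i (?L ! m)"
      using \<open>?L ! m \<in> F\<close> F(3) m by (auto simp: B_def hat_col_def)
    ultimately show ?thesis by (simp add: Xc_def)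
  qed
  have "0 = (\<Sum>m<Suc d. B $$ (0, m) * cofactor B 0 m)"
    using \<open>det B = 0\<close> laplace_expansion_row[OF B, of 0] by simp
  also have "\<dots> = B $$ (0, 0) * cofactor B 0 0 + (\<Sum>m<d. B $$ (0, Suc m) * cofactor B 0 (Suc m))"
    by (rule sum.lessThan_Suc_shift)
  also have "B $$ (0, 0) * cofactor B 0 0 = avar i 0 * bracket d ?c F"
  proof -
    have "B $$ (0, 0) = avar i 0" by (simp add: B_def hat_col_def)
    moreover have "cofactor B 0 0 = bracket d ?c F"
      using minor[of 0] by (simp add: cofactor_def bracket_eq_det delete_nth_def)
    ultimately show ?thesis by simp
  qed
  also have "(\<Sum>m<d. B $$ (0, Suc m) * cofactor B 0 (Suc m))
      = (\<Sum>m<d. \<mu> i (?L ! m) * Xc d \<mu> F (?L ! m))"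
    by (rule sum.cong) (simp_all add: col)
  also have "(\<Sum>m<d. \<mu> i (?L ! m) * Xc d \<mu> F (?L ! m)) = (\<Sum>j\<in>F. \<mu> i j * Xc d \<mu> F j)"
    using sum_sorted_list_of_set[OF F(1)] F(2) by simp
  finally show ?thesis by (simp add: eq_neg_iff_add_eq_0 add.commute)
qed

lemma bracket_insert0_minus_expansion:
  fixes c :: "nat \<Rightarrow> nat \<Rightarrow> 'a::comm_ring_1"
  assumes F: "finite F" "card F = d" "0 \<notin> F" and p: "p < d"
  shows "bracket d c (insert 0 F - {sorted_list_of_set F ! p})
    = (\<Sum>i<d. c (Suc i) 0 * ((-1) ^ i * det (mat_delete (bracket_mat d c (sorted_list_of_set F)) i p)))"
proof -
  let ?L = "sorted_list_of_set F"
  let ?M = "bracket_mat d c (0 # delete_nth p ?L)"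
  have "bracket d c (insert 0 F - {?L ! p}) = det ?M"
    using F p by (simp add: bracket_eq_det sorted_list_of_set_insert0_minus)
  also have "\<dots> = (\<Sum>i<d. ?M $$ (i, 0) * cofactor ?M i 0)"
    using p by (intro laplace_expansion_column) auto
  also have "\<dots> = (\<Sum>i<d. c (Suc i) 0 * ((-1) ^ i * det (mat_delete (bracket_mat d c ?L) i p)))"
  proof (rule sum.cong)
    fix i assume "i \<in> {..<d}"
    moreover have "mat_delete ?M i 0 = mat_delete (bracket_mat d c ?L) i p"
      using p F by (intro mat_delete_bracket_mat_delete_nth[symmetric]) auto
    ultimately show "?M $$ (i, 0) * cofactor ?M i 0
      = c (Suc i) 0 * ((-1) ^ i * det (mat_delete (bracket_mat d c ?L) i p))"
      by (simp add: cofactor_def bracket_mat_def)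
  qed simp
  finally show ?thesis .
qed

lemma a0_free_det_bracket_mat_minor:
  assumes "length xs = d" and free: "\<And>i m. i \<in> {1..d} \<Longrightarrow> m < d \<Longrightarrow> a0_free (c i (xs ! m))"
  shows "a0_free (det (mat_delete (bracket_mat d c xs) r p))"
proof (rule a0_free_det)
  show "mat_delete (bracket_mat d c xs) r p \<in> carrier_mat (d - 1) (d - 1)"
    by (rule mat_delete_carrier[OF bracket_mat_carrier])
  fix i m assume "i < d - 1" "m < d - 1"
  then show "a0_free (mat_delete (bracket_mat d c xs) r p $$ (i, m))"
    by (auto simp: mat_delete_def bracket_mat_def intro!: free)
qed

lemma bracket_insert0_ne_0:
  fixes \<mu> :: "nat \<Rightarrow> nat \<Rightarrow> 'k::field Khat"
  assumes F: "finite F" "card F = d" "0 \<notin> F" "j \<in> F"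
    and free: "\<And>i j. i \<in> {1..d} \<Longrightarrow> j \<in> F \<Longrightarrow> a0_free (\<mu> i j)"
    and "bracket d (hat_col \<mu>) F \<noteq> 0"
  shows "bracket d (hat_col \<mu>) (insert 0 F - {j}) \<noteq> 0"
proof
  let ?c = "hat_col \<mu>" and ?L = "sorted_list_of_set F"
  have L: "length ?L = d" "set ?L = F" using F by auto
  obtain p where p: "p < d" "j = ?L ! p" using F(4) L by (metis in_set_conv_nth)
  define N where "N i = mat_delete (bracket_mat d ?c ?L) i p" for i
  have "\<exists>i<d. det (N i) \<noteq> 0"
  proof (rule ccontr)
    assume "\<not> (\<exists>i<d. det (N i) \<noteq> 0)"
    then have "det (bracket_mat d ?c ?L) = 0"
      unfolding laplace_expansion_column[OF bracket_mat_carrier p(1)]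
      by (intro sum.neutral) (simp add: cofactor_def N_def)
    then show False using assms(6) by (simp add: bracket_eq_det)
  qed
  then obtain i0 where i0: "i0 < d" "det (N i0) \<noteq> 0" by blast
  have free_minor: "a0_free ((-1) ^ i * det (N i))" for i
  proof -
    have "a0_free (?c i (?L ! m))" if "i \<in> {1..d}" "m < d" for i m
      using that free L F(3) nth_mem[of m ?L] by (auto simp: hat_col_def)
    then have "a0_free (det (N i))"
      unfolding N_def using L(1) by (intro a0_free_det_bracket_mat_minor)
    then show ?thesis by (intro a0_free_mult a0_free_of_int[of "(-1) ^ i", simplified])
  qed
  assume "bracket d ?c (insert 0 F - {j}) = 0"
  then have "(\<Sum>i<d. avar (Suc i) 0 * ((-1) ^ i * det (N i))) = 0"
    using bracket_insert0_minus_expansion[OF F(1-3) p(1), of ?c] p(2)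
    by (simp add: N_def hat_col_def)
  then have "(\<Sum>i\<in>{1..d}. avar i 0 * ((-1) ^ (i - 1) * det (N (i - 1)))) = 0"
    by (simp add: sum.atLeast1_atMost_eq)
  then have "(-1) ^ (Suc i0 - 1) * det (N (Suc i0 - 1)) = 0"
    by (rule avar0_combination_eq_0[where e = "\<lambda>i. (-1) ^ (i - 1) * det (N (i - 1))", rotated 3])
      (use i0(1) free_minor in auto)
  then show False using i0(2) by simp
qed

section \<open>Simplicial complexes\<close>

lemma face_subset_vertices: "simplicial_complex n d \<Delta> \<Longrightarrow> G \<in> \<Delta> \<Longrightarrow> G \<subseteq> {1..n}"
  unfolding simplicial_complex_def by blast

lemma finite_face: "simplicial_complex n d \<Delta> \<Longrightarrow> G \<in> \<Delta> \<Longrightarrow> finite G"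
  by (rule finite_subset[OF face_subset_vertices]) auto

lemma zero_notin_face: "simplicial_complex n d \<Delta> \<Longrightarrow> G \<in> \<Delta> \<Longrightarrow> 0 \<notin> G"
  using face_subset_vertices[of n d \<Delta> G] by auto

lemma card_face_le: "simplicial_complex n d \<Delta> \<Longrightarrow> G \<in> \<Delta> \<Longrightarrow> card G \<le> d"
  unfolding simplicial_complex_def by blast

lemma face_downward_closed: "simplicial_complex n d \<Delta> \<Longrightarrow> G \<in> \<Delta> \<Longrightarrow> H \<subseteq> G \<Longrightarrow> H \<in> \<Delta>"
  unfolding simplicial_complex_def by blast

lemma finite_complex:
  assumes "simplicial_complex n d \<Delta>" shows "finite \<Delta>"
proof -
  have "\<Delta> \<subseteq> Pow {1..n}" using face_subset_vertices[OF assms] by blast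
  then show ?thesis by (rule finite_subset) simp
qed

lemma facet_in_complex: "F \<in> facets \<Delta> \<Longrightarrow> F \<in> \<Delta>"
  unfolding facets_def by simp

lemma finite_facets: "simplicial_complex n d \<Delta> \<Longrightarrow> finite (facets \<Delta>)"
  unfolding facets_def by (simp add: finite_complex)

lemma face_of_card_d_is_facet:
  assumes sc: "simplicial_complex n d \<Delta>" and G: "G \<in> \<Delta>" "card G = d"
  shows "G \<in> facets \<Delta>"
  unfolding facets_def
proof (intro CollectI conjI ballI impI)
  fix H assume H: "H \<in> \<Delta>" "G \<subseteq> H"
  have "card H \<le> card G" using card_face_le[OF sc H(1)] G(2) by simp
  then show "H = G" using card_seteq[OF finite_face[OF sc H(1)] H(2)] by simp
qed (fact G(1))

lemma face_subset_facet:
  assumes sc: "simplicial_complex n d \<Delta>" and G: "G \<in> \<Delta>"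
  shows "\<exists>F\<in>facets \<Delta>. G \<subseteq> F"
proof -
  define S where "S = {H \<in> \<Delta>. G \<subseteq> H}"
  have S: "finite S" "S \<noteq> {}" unfolding S_def using finite_complex[OF sc] G by auto
  have "Max (card ` S) \<in> card ` S" using S by (intro Max_in) auto
  then obtain F where F: "F \<in> S" "card F = Max (card ` S)" by (metis imageE)
  have "F \<in> facets \<Delta>" unfolding facets_def
  proof (intro CollectI conjI ballI impI)
    show "F \<in> \<Delta>" using F(1) unfolding S_def by simp
    fix H assume H: "H \<in> \<Delta>" "F \<subseteq> H"
    then have "H \<in> S" using F(1) unfolding S_def by auto
    then have "card H \<le> card F" unfolding F(2) using S(1) by simp
    then show "H = F" using card_seteq[OF finite_face[OF sc H(1)] H(2)] by simp
  qed
  then show ?thesis using F(1) unfolding S_def by blast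
qed

interpretation chain_space: vector_space "\<lambda>(c::'k::field) (f::nat set \<Rightarrow> 'k) x. c * f x"
  by unfold_locales (simp_all add: fun_eq_iff algebra_simps)

lemma sphere_homology_empty_complex:
  assumes "sphere_homology TYPE('k::field) {{}} m"
  shows "m = -1"
proof -
  have bd0: "bd {{}} (f :: nat set \<Rightarrow> 'k) = 0" for f
  proof
    fix \<tau> :: "nat set"
    have "{\<sigma> \<in> {{}}. \<tau> \<subseteq> \<sigma> \<and> card \<sigma> = Suc (card \<tau>)} = {}" by auto
    then show "bd {{}} f \<tau> = 0 \<tau>" unfolding bd_def by (simp only: sum.empty zero_fun_def)
  qed
  have "chains TYPE('k) {{}} 1 = {0}"
  proof (intro equalityI subsetI)
    fix f :: "nat set \<Rightarrow> 'k" assume "f \<in> chains TYPE('k) {{}} 1"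
    then have "f \<sigma> = 0" for \<sigma> unfolding chains_def by (cases "\<sigma> = {}") auto
    then show "f \<in> {0}" by (simp add: fun_eq_iff)
  qed (simp add: chains_def)
  then have "kdim TYPE('k) (bd {{}} ` chains TYPE('k) {{}} 1) = 0"
    unfolding kdim_def
    by (simp add: bd0, intro chain_space.dim_unique[of "{}"]) (simp_all add: chain_space.independent_empty)
  moreover have "kdim TYPE('k) {f \<in> chains TYPE('k) {{}} 0. bd {{}} f = 0} = 1"
    unfolding kdim_def
  proof (rule chain_space.dim_unique[of "{\<lambda>\<sigma>. if \<sigma> = {} then 1 else 0}"])
    let ?\<delta> = "\<lambda>\<sigma>::nat set. if \<sigma> = {} then 1 else (0::'k)"
    show "{?\<delta>} \<subseteq> {f \<in> chains TYPE('k) {{}} 0. bd {{}} f = 0}"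
      by (simp add: chains_def bd0)
    show "{f \<in> chains TYPE('k) {{}} 0. bd {{}} f = 0} \<subseteq> chain_space.span {?\<delta>}"
    proof
      fix f assume "f \<in> {f \<in> chains TYPE('k) {{}} 0. bd {{}} f = 0}"
      then have "f = (\<lambda>\<sigma>. f {} * ?\<delta> \<sigma>)"
        unfolding chains_def by (auto simp: fun_eq_iff)
      then show "f \<in> chain_space.span {?\<delta>}"
        by (metis chain_space.span_base chain_space.span_scale singletonI)
    qed
    show "chain_space.independent {?\<delta>}" by (simp add: fun_eq_iff)
  qed simp
  ultimately have "(1::nat) = 0 + (if int 0 - 1 = m then 1 else 0)"
    using assms[unfolded sphere_homology_def, rule_format, of 0] by (simp only: One_nat_def)
  then show ?thesis by (simp split: if_splits)
qed

lemma link_facet: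
  assumes "simplicial_complex n d \<Delta>" "F \<in> facets \<Delta>"
  shows "link \<Delta> F = {{}}"
proof (intro equalityI subsetI)
  fix H :: "nat set" assume "H \<in> link \<Delta> F"
  then have "H \<inter> F = {}" "H \<union> F \<in> \<Delta>" unfolding link_def by auto
  then show "H \<in> {{}}" using assms(2) unfolding facets_def by blast
next
  fix H :: "nat set" assume "H \<in> {{}}"
  moreover have "{} \<in> \<Delta>" using assms(1) unfolding simplicial_complex_def by blast
  ultimately show "H \<in> link \<Delta> F"
    using facet_in_complex[OF assms(2)] unfolding link_def by simp
qed

text \<open>The link of a facet is {\<emptyset>}, whose homology is that of the (-1)-sphere only.\<close>
lemma card_facet:
  assumes sc: "simplicial_complex n d \<Delta>" and "d \<ge> 1"
    and hm: "homology_manifold TYPE('k::field) d \<Delta>" and F: "F \<in> facets \<Delta>"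
  shows "card F = d"
proof -
  have "F \<noteq> {}"
  proof
    assume "F = {}"
    moreover obtain H where "H \<in> \<Delta>" "card H = d" using sc unfolding simplicial_complex_def by blast
    ultimately show False using F \<open>d \<ge> 1\<close> unfolding facets_def by auto
  qed
  then have "sphere_homology TYPE('k) (link \<Delta> F) (int d - int (card F) - 1)"
    using hm facet_in_complex[OF F] unfolding homology_manifold_def by blast
  then have "sphere_homology TYPE('k) {{}} (int d - int (card F) - 1)"
    by (simp only: link_facet[OF sc F])
  then have "int d - int (card F) - 1 = -1" by (rule sphere_homology_empty_complex)
  then show ?thesis by simp
qed

section \<open>Monomials\<close>

definition mono_eval :: "(nat \<Rightarrow>\<^sub>0 nat) \<Rightarrow> (nat \<Rightarrow> 'a::comm_monoid_mult) \<Rightarrow> 'a" where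
  "mono_eval \<alpha> x = (\<Prod>j\<in>Poly_Mapping.keys \<alpha>. x j ^ Poly_Mapping.lookup \<alpha> j)"

lemma mono_eval_superset:
  assumes "finite S" "Poly_Mapping.keys \<alpha> \<subseteq> S"
  shows "mono_eval \<alpha> x = (\<Prod>j\<in>S. x j ^ Poly_Mapping.lookup \<alpha> j)"
  unfolding mono_eval_def
  by (rule prod.mono_neutral_left) (use assms in \<open>auto simp: in_keys_iff\<close>)

lemma mono_eval_add: "mono_eval (\<alpha> + \<beta>) x = mono_eval \<alpha> x * mono_eval \<beta> x"
proof -
  let ?S = "Poly_Mapping.keys \<alpha> \<union> Poly_Mapping.keys \<beta>"
  have "mono_eval (\<alpha> + \<beta>) x = (\<Prod>j\<in>?S. x j ^ Poly_Mapping.lookup (\<alpha> + \<beta>) j)"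
    by (rule mono_eval_superset) (simp_all add: keys_add)
  also have "\<dots> = mono_eval \<alpha> x * mono_eval \<beta> x"
    by (simp add: lookup_add power_add prod.distrib mono_eval_superset[of ?S])
  finally show ?thesis .
qed

lemma mono_eval_single: "mono_eval (Poly_Mapping.single j 1) x = x j"
  unfolding mono_eval_def by simp

lemma mono_eval_eq_0:
  fixes x :: "nat \<Rightarrow> 'a::comm_semiring_1"
  assumes "j \<in> Poly_Mapping.keys \<alpha>" "x j = 0"
  shows "mono_eval \<alpha> x = 0"
  unfolding mono_eval_def
proof (rule prod_zero)
  show "\<exists>a\<in>Poly_Mapping.keys \<alpha>. x a ^ Poly_Mapping.lookup \<alpha> a = 0"
    using assms by (intro bexI[of _ j]) (simp_all add: in_keys_iff zero_power)
qed simp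

lemma lookup_mono_of: "finite F \<Longrightarrow> Poly_Mapping.lookup (mono_of F) j = (if j \<in> F then 1 else 0)"
  unfolding mono_of_def by (simp add: lookup_sum lookup_single when_def)

lemma keys_mono_of: "finite F \<Longrightarrow> Poly_Mapping.keys (mono_of F) = F"
  by (auto simp: in_keys_iff lookup_mono_of split: if_splits)

lemma mono_eval_mono_of: "finite F \<Longrightarrow> mono_eval (mono_of F) x = (\<Prod>j\<in>F. x j)"
  unfolding mono_eval_def by (simp add: keys_mono_of lookup_mono_of)

lemma mdeg_add: "mdeg (\<alpha> + \<beta>) = mdeg \<alpha> + mdeg \<beta>"
proof -
  let ?S = "Poly_Mapping.keys \<alpha> \<union> Poly_Mapping.keys \<beta>"
  have mdeg: "mdeg \<gamma> = (\<Sum>j\<in>?S. Poly_Mapping.lookup \<gamma> j)" if "Poly_Mapping.keys \<gamma> \<subseteq> ?S" for \<gamma>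
    unfolding mdeg_def by (rule sum.mono_neutral_left) (use that in \<open>auto simp: in_keys_iff\<close>)
  show ?thesis
    by (simp add: mdeg keys_add lookup_add sum.distrib)
qed

lemma mdeg_single: "mdeg (Poly_Mapping.single j 1) = 1"
  unfolding mdeg_def by simp

lemma keys_add_single:
  "Poly_Mapping.keys (\<alpha> + Poly_Mapping.single j (1::nat)) = insert j (Poly_Mapping.keys \<alpha>)"
  by (auto simp: in_keys_iff lookup_add lookup_single when_def split: if_splits)

lemma eq_mono_of_keys_if_mdeg_eq_card:
  assumes "mdeg \<alpha> = card (Poly_Mapping.keys \<alpha>)"
  shows "\<alpha> = mono_of (Poly_Mapping.keys \<alpha>)"
proof (rule poly_mapping_eqI)
  fix j
  have "Poly_Mapping.lookup \<alpha> j = 1" if j: "j \<in> Poly_Mapping.keys \<alpha>"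
  proof (rule ccontr)
    assume "Poly_Mapping.lookup \<alpha> j \<noteq> 1"
    with j have "1 < Poly_Mapping.lookup \<alpha> j" by (simp add: in_keys_iff)
    then have "(\<Sum>j\<in>Poly_Mapping.keys \<alpha>. 1) < mdeg \<alpha>"
      unfolding mdeg_def using j by (intro sum_strict_mono_ex1) (auto simp: in_keys_iff)
    with assms show False by simp
  qed
  then show "Poly_Mapping.lookup \<alpha> j = Poly_Mapping.lookup (mono_of (Poly_Mapping.keys \<alpha>)) j"
    by (simp add: lookup_mono_of in_keys_iff)
qed

lemma exponent_ge_2_if_card_keys_less_mdeg:
  assumes "card (Poly_Mapping.keys \<alpha>) < mdeg \<alpha>"
  shows "\<exists>j\<in>Poly_Mapping.keys \<alpha>. 2 \<le> Poly_Mapping.lookup \<alpha> j"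
proof (rule ccontr)
  assume none: "\<not> ?thesis"
  have "Poly_Mapping.lookup \<alpha> j = 1" if j: "j \<in> Poly_Mapping.keys \<alpha>" for j
  proof -
    have "Poly_Mapping.lookup \<alpha> j \<noteq> 0" "\<not> 2 \<le> Poly_Mapping.lookup \<alpha> j"
      using j none by (auto simp: in_keys_iff)
    then show ?thesis by linarith
  qed
  then have "mdeg \<alpha> = card (Poly_Mapping.keys \<alpha>)" unfolding mdeg_def by simp
  with assms show False by simp
qed

lemma Mons_add_single:
  assumes "\<beta> \<in> Mons n (d - 1)" "j \<in> {1..n}" "d \<ge> 1"
  shows "\<beta> + Poly_Mapping.single j 1 \<in> Mons n d"
  using assms unfolding Mons_def mem_Collect_eq keys_add_single mdeg_add mdeg_single by auto

lemma Mons_remove_single: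
  assumes "\<alpha> \<in> Mons n d" "2 \<le> Poly_Mapping.lookup \<alpha> j"
  obtains \<beta> where "\<alpha> = \<beta> + Poly_Mapping.single j 1" "\<beta> \<in> Mons n (d - 1)"
    "Poly_Mapping.keys \<beta> = Poly_Mapping.keys \<alpha>"
proof
  define \<beta> where "\<beta> = \<alpha> - Poly_Mapping.single j 1"
  have lookup_\<beta>: "Poly_Mapping.lookup \<beta> x = Poly_Mapping.lookup \<alpha> x - (if x = j then 1 else 0)" for x
    unfolding \<beta>_def by (simp add: lookup_minus lookup_single when_def)
  show \<alpha>: "\<alpha> = \<beta> + Poly_Mapping.single j 1"
    by (rule poly_mapping_eqI) (use assms(2) in \<open>simp add: lookup_add lookup_\<beta> lookup_single when_def\<close>)
  show keys: "Poly_Mapping.keys \<beta> = Poly_Mapping.keys \<alpha>"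
    using assms(2) by (auto simp: in_keys_iff lookup_\<beta>)
  have "mdeg \<alpha> = mdeg \<beta> + 1" by (subst \<alpha>) (simp only: mdeg_add mdeg_single)
  then show "\<beta> \<in> Mons n (d - 1)" using assms(1) keys unfolding Mons_def by auto
qed

section \<open>Uniqueness of the degree map\<close>

lemma coeff_eq_0_if_combination_in_avar0_line:
  fixes \<mu> :: "nat \<Rightarrow> nat \<Rightarrow> 'k::field Khat"
  assumes F: "finite F" "card F = d" "0 \<notin> F" "j0 \<in> F" and G: "G \<subseteq> F - {j0}"
    and nonzero: "bracket d (hat_col \<mu>) (insert 0 F - {j0}) \<noteq> 0"
    and comb: "\<And>i. i \<in> {1..d} \<Longrightarrow> (\<Sum>j\<in>G. \<mu> i j * v j) = c * avar i 0"
    and "j \<in> G"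
  shows "v j = 0"
proof -
  let ?C = "insert 0 F - {j0}"
  define w where "w x = (if x = 0 then - c else if x \<in> G then v x else 0)" for x
  have "(\<Sum>x\<in>?C. hat_col \<mu> i x * w x) = 0" if i: "i \<in> {1..d}" for i
  proof -
    have "j0 \<noteq> 0" using F(3,4) by metis
    then have "0 \<in> ?C" by simp
    then have "(\<Sum>x\<in>?C. hat_col \<mu> i x * w x)
        = hat_col \<mu> i 0 * w 0 + (\<Sum>x\<in>?C - {0}. hat_col \<mu> i x * w x)"
      using F(1) by (intro sum.remove) auto
    also have "(\<Sum>x\<in>?C - {0}. hat_col \<mu> i x * w x) = (\<Sum>x\<in>G. \<mu> i x * v x)"
    proof (rule sum.mono_neutral_cong_right)
      show "G \<subseteq> ?C - {0}" using G F(3) by auto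
    qed (use F(1) G F(3) in \<open>auto simp: w_def hat_col_def\<close>)
    finally show ?thesis using comb[OF i] by (simp add: w_def hat_col_def)
  qed
  moreover have "j \<in> ?C" "finite ?C" "card ?C = d" using assms G F by auto
  ultimately have "w j = 0" using nonzero by (intro bracket_ne_0_columns_independent) auto
  moreover have "j \<noteq> 0" using \<open>j \<in> G\<close> G F(3) by (metis Diff_iff subsetD)
  ultimately show ?thesis using \<open>j \<in> G\<close> by (simp add: w_def)
qed

lemma coeff_eq_0_if_face_combination_in_avar0_line:
  fixes \<mu> :: "nat \<Rightarrow> nat \<Rightarrow> 'k::field Khat"
  assumes sc: "simplicial_complex n d \<Delta>" and pure: "\<And>F. F \<in> facets \<Delta> \<Longrightarrow> card F = d"
    and nonzero: "\<And>F j. F \<in> facets \<Delta> \<Longrightarrow> j \<in> F \<Longrightarrow> bracket d (hat_col \<mu>) (insert 0 F - {j}) \<noteq> 0"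
    and G: "G \<in> \<Delta>" "card G < d"
    and comb: "\<And>i. i \<in> {1..d} \<Longrightarrow> (\<Sum>j\<in>G. \<mu> i j * v j) = c * avar i 0"
    and "j \<in> G"
  shows "v j = 0"
proof -
  obtain F where F: "F \<in> facets \<Delta>" "G \<subseteq> F"
    using face_subset_facet[OF sc G(1)] by blast
  have F_props: "finite F" "card F = d" "0 \<notin> F"
    using F(1) pure facet_in_complex finite_face[OF sc] zero_notin_face[OF sc] by auto
  have "\<not> F \<subseteq> G"
  proof
    assume "F \<subseteq> G"
    then have "G = F" using F(2) by (rule subset_antisym[rotated])
    then show False using F_props(2) G(2) by simp
  qed
  then obtain j0 where j0: "j0 \<in> F" "j0 \<notin> G" by blast
  show ?thesis
    using F_props j0 F(2) nonzero[OF F(1) j0(1)] comb \<open>j \<in> G\<close>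
    by (intro coeff_eq_0_if_combination_in_avar0_line[of F d j0 G]) auto
qed

lemma eq_0_on_Mons_if_relations_in_avar0_line:
  fixes D :: "(nat \<Rightarrow>\<^sub>0 nat) \<Rightarrow> 'k::field Khat" and \<mu> :: "nat \<Rightarrow> nat \<Rightarrow> 'k Khat"
  assumes sc: "simplicial_complex n d \<Delta>" and pure: "\<And>F. F \<in> facets \<Delta> \<Longrightarrow> card F = d"
    and nonzero: "\<And>F j. F \<in> facets \<Delta> \<Longrightarrow> j \<in> F \<Longrightarrow> bracket d (hat_col \<mu>) (insert 0 F - {j}) \<noteq> 0"
    and nonface: "\<And>\<alpha>. \<alpha> \<in> Mons n d \<Longrightarrow> Poly_Mapping.keys \<alpha> \<notin> \<Delta> \<Longrightarrow> D \<alpha> = 0"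
    and facet: "\<And>F. F \<in> facets \<Delta> \<Longrightarrow> D (mono_of F) = 0"
    and rel: "\<And>\<beta>. \<beta> \<in> Mons n (d - 1) \<Longrightarrow>
      \<exists>c. \<forall>i\<in>{1..d}. (\<Sum>j=1..n. \<mu> i j * D (\<beta> + Poly_Mapping.single j 1)) = c * avar i 0"
    and "\<alpha> \<in> Mons n d"
  shows "D \<alpha> = 0"
  using \<open>\<alpha> \<in> Mons n d\<close>
proof (induction "d - card (Poly_Mapping.keys \<alpha>)" arbitrary: \<alpha> rule: less_induct)
  case less
  let ?G = "Poly_Mapping.keys \<alpha>"
  have G: "?G \<subseteq> {1..n}" "mdeg \<alpha> = d" using less.prems unfolding Mons_def by auto
  consider "?G \<notin> \<Delta>" | "?G \<in> \<Delta>" "card ?G = d" | "?G \<in> \<Delta>" "card ?G < d"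
    using card_face_le[OF sc] by fastforce
  then show ?case
  proof cases
    case 1
    then show ?thesis using nonface less.prems by blast
  next
    case 2
    then have "?G \<in> facets \<Delta>" "\<alpha> = mono_of ?G"
      using face_of_card_d_is_facet[OF sc] eq_mono_of_keys_if_mdeg_eq_card G(2) by auto
    then show ?thesis using facet by metis
  next
    case 3
    obtain j where j: "j \<in> ?G" "2 \<le> Poly_Mapping.lookup \<alpha> j"
      using exponent_ge_2_if_card_keys_less_mdeg 3(2) G(2) by metis
    obtain \<beta> where \<beta>: "\<alpha> = \<beta> + Poly_Mapping.single j 1" "\<beta> \<in> Mons n (d - 1)"
      "Poly_Mapping.keys \<beta> = ?G"
      using Mons_remove_single[OF less.prems j(2)] by metis
    have outside: "D (\<beta> + Poly_Mapping.single j' 1) = 0" if j': "j' \<in> {1..n} - ?G" for j'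
    proof (rule less.hyps)
      have "Poly_Mapping.keys (\<beta> + Poly_Mapping.single j' 1) = insert j' ?G"
        unfolding keys_add_single \<beta>(3) ..
      then show "d - card (Poly_Mapping.keys (\<beta> + Poly_Mapping.single j' 1)) < d - card ?G"
        using j' 3(2) by simp
      show "\<beta> + Poly_Mapping.single j' 1 \<in> Mons n d"
        using Mons_add_single[OF \<beta>(2)] j' 3(2) by simp
    qed
    obtain c where c: "\<And>i. i \<in> {1..d} \<Longrightarrow>
        (\<Sum>j'=1..n. \<mu> i j' * D (\<beta> + Poly_Mapping.single j' 1)) = c * avar i 0"
      using rel[OF \<beta>(2)] by blast
    have comb: "(\<Sum>j'\<in>?G. \<mu> i j' * D (\<beta> + Poly_Mapping.single j' 1)) = c * avar i 0"
      if "i \<in> {1..d}" for i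
    proof -
      have "(\<Sum>j'=1..n. \<mu> i j' * D (\<beta> + Poly_Mapping.single j' 1))
          = (\<Sum>j'\<in>?G. \<mu> i j' * D (\<beta> + Poly_Mapping.single j' 1))"
        by (rule sum.mono_neutral_right) (use G(1) outside in auto)
      then show ?thesis using c[OF that] by simp
    qed
    have "D (\<beta> + Poly_Mapping.single j 1) = 0"
      using sc pure nonzero 3 comb j(1) by (rule coeff_eq_0_if_face_combination_in_avar0_line)
    then show ?thesis using \<beta>(1) by simp
  qed
qed

section \<open>The formula\<close>

lemma Xc_ne_0:
  assumes sc: "simplicial_complex n d \<Delta>" and F: "F \<in> facets \<Delta>" "card F = d" "j \<in> F"
    and K: "\<forall>i\<in>{1..d}. \<forall>j\<in>{1..n}. \<mu> i j \<in> Kfield d n"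
    and "bracket d (hat_col \<mu>) F \<noteq> 0"
  shows "Xc d \<mu> F j \<noteq> 0"
proof -
  have "F \<in> \<Delta>" by (rule facet_in_complex[OF F(1)])
  then have "bracket d (hat_col \<mu>) (insert 0 F - {j}) \<noteq> 0"
    using assms face_subset_vertices[OF sc] Kfield_a0_free
    by (intro bracket_insert0_ne_0 finite_face[OF sc] zero_notin_face[OF sc]) blast+
  then show ?thesis by (simp add: Xc_def)
qed

definition facet_point :: "nat \<Rightarrow> (nat \<Rightarrow> nat \<Rightarrow> 'k::field Khat) \<Rightarrow> nat set \<Rightarrow> nat \<Rightarrow> 'k Khat" where
  "facet_point d \<mu> F = (\<lambda>j. if j \<in> F then Xc d \<mu> F j else 0)"

definition deg_formula :: "'k::field itself \<Rightarrow> nat \<Rightarrow> nat set set \<Rightarrow> (nat set \<Rightarrow> nat list)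
    \<Rightarrow> (nat \<Rightarrow> nat \<Rightarrow> 'k Khat) \<Rightarrow> (nat \<Rightarrow>\<^sub>0 nat) \<Rightarrow> 'k Khat" where
  "deg_formula k d \<Delta> ori \<mu> \<alpha> = (\<Sum>F\<in>facets \<Delta>. eps k ori F * mono_eval \<alpha> (facet_point d \<mu> F)
      / (bracket d (hat_col \<mu>) F * (\<Prod>j\<in>F. Xc d \<mu> F j)))"

lemma mono_eval_facet_point_eq_0:
  "\<not> Poly_Mapping.keys \<alpha> \<subseteq> F \<Longrightarrow> mono_eval \<alpha> (facet_point d \<mu> F) = 0"
  by (metis facet_point_def mono_eval_eq_0 subsetI)

lemma deg_formula_nonface:
  assumes sc: "simplicial_complex n d \<Delta>" and "Poly_Mapping.keys \<alpha> \<notin> \<Delta>"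
  shows "deg_formula k d \<Delta> ori \<mu> \<alpha> = 0"
  unfolding deg_formula_def
proof (rule sum.neutral, rule ballI)
  fix F assume "F \<in> facets \<Delta>"
  then have "\<not> Poly_Mapping.keys \<alpha> \<subseteq> F"
    using assms face_downward_closed[OF sc facet_in_complex] by blast
  then show "eps k ori F * mono_eval \<alpha> (facet_point d \<mu> F)
      / (bracket d (hat_col \<mu>) F * (\<Prod>j\<in>F. Xc d \<mu> F j)) = 0"
    by (simp add: mono_eval_facet_point_eq_0)
qed

lemma deg_formula_mono_of_facet:
  assumes sc: "simplicial_complex n d \<Delta>" and G: "G \<in> facets \<Delta>"
    and nonzero: "\<And>j. j \<in> G \<Longrightarrow> Xc d \<mu> G j \<noteq> 0"
  shows "deg_formula k d \<Delta> ori \<mu> (mono_of G) = eps k ori G / bracket d (hat_col \<mu>) G"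
proof -
  have fin: "finite G" using finite_face[OF sc facet_in_complex[OF G]] .
  have others: "mono_eval (mono_of G) (facet_point d \<mu> F) = 0" if "F \<in> facets \<Delta> - {G}" for F
  proof (rule mono_eval_facet_point_eq_0)
    show "\<not> Poly_Mapping.keys (mono_of G) \<subseteq> F"
      using that G facet_in_complex unfolding keys_mono_of[OF fin] facets_def by blast
  qed
  have "mono_eval (mono_of G) (facet_point d \<mu> G) = (\<Prod>j\<in>G. Xc d \<mu> G j)"
    by (simp add: mono_eval_mono_of fin facet_point_def)
  moreover have "(\<Prod>j\<in>G. Xc d \<mu> G j) \<noteq> 0" using fin nonzero by simp
  ultimately show ?thesis
    unfolding deg_formula_def using finite_facets[OF sc] G
    by (simp add: sum.remove others)
qed

lemma deg_formula_relation:
  fixes \<mu> :: "nat \<Rightarrow> nat \<Rightarrow> 'k::field Khat"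
  assumes sc: "simplicial_complex n d \<Delta>" and pure: "\<And>F. F \<in> facets \<Delta> \<Longrightarrow> card F = d"
    and i: "i \<in> {1..d}"
  shows "(\<Sum>j=1..n. \<mu> i j * deg_formula k d \<Delta> ori \<mu> (\<beta> + Poly_Mapping.single j 1))
    = - (\<Sum>F\<in>facets \<Delta>. eps k ori F * mono_eval \<beta> (facet_point d \<mu> F)
          / (bracket d (hat_col \<mu>) F * (\<Prod>j\<in>F. Xc d \<mu> F j)) * bracket d (hat_col \<mu>) F) * avar i 0"
proof -
  define t where "t F = eps k ori F * mono_eval \<beta> (facet_point d \<mu> F)
      / (bracket d (hat_col \<mu>) F * (\<Prod>j\<in>F. Xc d \<mu> F j))" for F
  have facet_sum: "(\<Sum>j=1..n. \<mu> i j * facet_point d \<mu> F j) = - (avar i 0 * bracket d (hat_col \<mu>) F)"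
    if F: "F \<in> facets \<Delta>" for F
  proof -
    have F': "F \<subseteq> {1..n}" "finite F" "0 \<notin> F"
      using facet_in_complex[OF F] face_subset_vertices[OF sc] finite_face[OF sc]
        zero_notin_face[OF sc] by auto
    have "(\<Sum>j=1..n. \<mu> i j * facet_point d \<mu> F j) = (\<Sum>j\<in>F. \<mu> i j * Xc d \<mu> F j)"
      using F'(1) by (intro sum.mono_neutral_cong_right) (auto simp: facet_point_def)
    also have "\<dots> = - (avar i 0 * bracket d (hat_col \<mu>) F)"
      using F'(2) pure[OF F] F'(3) i by (rule sum_mu_Xc)
    finally show ?thesis .
  qed
  have "deg_formula k d \<Delta> ori \<mu> (\<beta> + Poly_Mapping.single j 1)
      = (\<Sum>F\<in>facets \<Delta>. t F * facet_point d \<mu> F j)" for j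
    unfolding deg_formula_def mono_eval_add mono_eval_single t_def
    by (intro sum.cong) (simp_all add: ac_simps)
  then have "(\<Sum>j=1..n. \<mu> i j * deg_formula k d \<Delta> ori \<mu> (\<beta> + Poly_Mapping.single j 1))
      = (\<Sum>j=1..n. \<Sum>F\<in>facets \<Delta>. t F * (\<mu> i j * facet_point d \<mu> F j))"
    by (simp add: sum_distrib_left mult.left_commute)
  also have "\<dots> = (\<Sum>F\<in>facets \<Delta>. t F * (\<Sum>j=1..n. \<mu> i j * facet_point d \<mu> F j))"
    by (subst sum.swap) (simp add: sum_distrib_left)
  also have "\<dots> = (\<Sum>F\<in>facets \<Delta>. - (t F * bracket d (hat_col \<mu>) F) * avar i 0)"
    by (intro sum.cong refl) (simp only: facet_sum, simp add: algebra_simps)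
  finally show ?thesis unfolding t_def by (simp add: sum_distrib_right sum_negf)
qed

lemma deg_map_eq_deg_formula:
  assumes sc: "simplicial_complex n d \<Delta>" and pure: "\<And>F. F \<in> facets \<Delta> \<Longrightarrow> card F = d"
    and nonzero: "\<And>F j. F \<in> facets \<Delta> \<Longrightarrow> j \<in> F \<Longrightarrow> Xc d \<mu> F j \<noteq> 0"
    and \<phi>: "is_deg_map k n d \<Delta> ori \<mu> \<phi>" and \<alpha>: "\<alpha> \<in> Mons n d"
  shows "\<phi> \<alpha> = deg_formula k d \<Delta> ori \<mu> \<alpha>"
proof -
  let ?D = "\<lambda>\<alpha>. \<phi> \<alpha> - deg_formula k d \<Delta> ori \<mu> \<alpha>"
  have "?D \<alpha> = 0"
  proof (rule eq_0_on_Mons_if_relations_in_avar0_line[OF sc pure _ _ _ _ \<alpha>])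
    show "bracket d (hat_col \<mu>) (insert 0 F - {j}) \<noteq> 0" if "F \<in> facets \<Delta>" "j \<in> F" for F j
      using nonzero[OF that] by (simp add: Xc_def)
    show "?D \<alpha> = 0" if "\<alpha> \<in> Mons n d" "Poly_Mapping.keys \<alpha> \<notin> \<Delta>" for \<alpha>
      using that \<phi> deg_formula_nonface[OF sc] unfolding is_deg_map_def by simp
    show "?D (mono_of F) = 0" if "F \<in> facets \<Delta>" for F
      using that \<phi> deg_formula_mono_of_facet[OF sc that nonzero] unfolding is_deg_map_def by simp
    show "\<exists>c. \<forall>i\<in>{1..d}. (\<Sum>j=1..n. \<mu> i j * ?D (\<beta> + Poly_Mapping.single j 1)) = c * avar i 0"
      if \<beta>: "\<beta> \<in> Mons n (d - 1)" for \<beta>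
    proof (intro exI ballI)
      fix i assume i: "i \<in> {1..d}"
      have "(\<Sum>j=1..n. \<mu> i j * \<phi> (\<beta> + Poly_Mapping.single j 1)) = 0"
        using \<phi> i \<beta> unfolding is_deg_map_def by blast
      moreover note deg_formula_relation[OF sc pure i, where k = k and ori = ori and \<beta> = \<beta>]
      ultimately show "(\<Sum>j=1..n. \<mu> i j * ?D (\<beta> + Poly_Mapping.single j 1))
          = (\<Sum>F\<in>facets \<Delta>. eps k ori F * mono_eval \<beta> (facet_point d \<mu> F)
            / (bracket d (hat_col \<mu>) F * (\<Prod>j\<in>F. Xc d \<mu> F j)) * bracket d (hat_col \<mu>) F)
            * avar i 0"
        by (simp only: right_diff_distrib sum_subtractf) simp
    qed
  qed
  then show ?thesis by simp
qed

lemma sum_coeff_deg_formula: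
  "(\<Sum>\<alpha>\<in>Poly_Mapping.keys g. of_k (Poly_Mapping.lookup g \<alpha>) * deg_formula k d \<Delta> ori \<mu> \<alpha>)
    = (\<Sum>F\<in>facets \<Delta>. eps k ori F * mpoly_eval g (facet_point d \<mu> F)
        / (bracket d (hat_col \<mu>) F * (\<Prod>j\<in>F. Xc d \<mu> F j)))"
  unfolding deg_formula_def mpoly_eval_def mono_eval_def
  by (simp add: sum_distrib_left sum_divide_distrib ac_simps sum.swap[of _ "Poly_Mapping.keys g"])

theorem corollary2p7:
  fixes \<Delta> :: "nat set set" and n d :: nat and ori :: "nat set \<Rightarrow> nat list"
    and \<mu> :: "nat \<Rightarrow> nat \<Rightarrow> ('k::field) Khat"
    and g :: "(nat \<Rightarrow>\<^sub>0 nat) \<Rightarrow>\<^sub>0 'k"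
    and \<phi> :: "(nat \<Rightarrow>\<^sub>0 nat) \<Rightarrow> 'k Khat"
  assumes "d \<ge> 2"
    and "simplicial_complex n d \<Delta>"
    and "connected_cx \<Delta>"
    and "homology_manifold TYPE('k) d \<Delta>"
    and "CHAR('k) \<noteq> 2 \<Longrightarrow> is_orientation d \<Delta> ori"
    and "\<forall>i\<in>{1..d}. \<forall>j\<in>{1..n}. \<mu> i j \<in> Kfield d n"
    and "is_lsop d \<Delta> \<mu>"
    and "homogeneous n d g"
    and "is_deg_map TYPE('k) n d \<Delta> ori \<mu> \<phi>"
  shows "(\<forall>F\<in>facets \<Delta>. \<forall>j\<in>F. Xc d \<mu> F j \<noteq> 0) \<and>
         deg_eval \<phi> g =
           (\<Sum>F\<in>facets \<Delta>.
              eps TYPE('k) ori F * mpoly_eval g (\<lambda>j. if j \<in> F then Xc d \<mu> F j else 0)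
              / (bracket d (hat_col \<mu>) F * (\<Prod>j\<in>F. Xc d \<mu> F j)))"
proof -
  note sc = assms(2)
  have pure: "card F = d" if "F \<in> facets \<Delta>" for F
    using card_facet[OF sc _ assms(4) that] assms(1) by simp
  have nonzero: "Xc d \<mu> F j \<noteq> 0" if "F \<in> facets \<Delta>" "j \<in> F" for F j
    using Xc_ne_0[OF sc that(1) pure[OF that(1)] that(2) assms(6)] assms(7) that(1)
    unfolding is_lsop_def by blast
  have "deg_eval \<phi> g
      = (\<Sum>\<alpha>\<in>Poly_Mapping.keys g. of_k (Poly_Mapping.lookup g \<alpha>) * deg_formula TYPE('k) d \<Delta> ori \<mu> \<alpha>)"
    unfolding deg_eval_def using assms(8,9) unfolding homogeneous_def
    by (intro sum.cong refl) (auto simp: deg_map_eq_deg_formula[OF sc pure nonzero])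
  also have "\<dots> = (\<Sum>F\<in>facets \<Delta>. eps TYPE('k) ori F * mpoly_eval g (facet_point d \<mu> F)
        / (bracket d (hat_col \<mu>) F * (\<Prod>j\<in>F. Xc d \<mu> F j)))"
    by (rule sum_coeff_deg_formula)
  finally show ?thesis using nonzero unfolding facet_point_def by blast
qed

end
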